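(* In the N-CIRL game described in the context, the primal value backup operator $G$, acting on bounded functions $v:\mathcal{S}\times\Delta(\Theta)\to\mathbb{R}$ by $$[Gv](s,b)=\max_{\bar\pi^A}\min_{\bar\pi^D}\Big\{\sum_{a,d,s',\vartheta}b(\vartheta)\bar\pi^A(a\mid s,\vartheta)\bar\pi^D(d\mid s)\mathcal{T}(s'\mid s,a,d)\big(R(s,a,d,s';\vartheta)+\gamma\,v(s',\tau(s,b,a))\big)\Big\},$$ with $\tau_\vartheta(s,b,a)=\bar\pi^A(a\mid s,\vartheta)b(\vartheta)/\sum_{\vartheta'}\bar\pi^A(a\mid s,\vartheta')b(\vartheta')$, is a contraction mapping with respect to the supremum norm. Consequently, iterating $G$ from any bounded initial function converges to the value function of the N-CIRL game, which is the fixed point of $v=Gv$.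
   Context: N-CIRL game: finite state set $\mathcal{S}$, finite attacker action set $\mathcal{A}$, finite defender action set $\mathcal{D}$, transition kernel $\mathcal{T}(s'\mid s,a,d)$, finite intent parameter set $\Theta$, bounded reward $R(s,a,d,s';\theta)$ to the attacker (the defender receives $-R$), discount factor $\gamma\in[0,1)$. The intent $\theta$ is known only to the attacker; states and both players' past actions are publicly observed. The value function is $v(s,b)=\max_{\sigma^A}\min_{\sigma^D}\mathbb{E}[\sum_{t\ge0}\gamma^tR(s_t,a_t,d_t,s_{t+1};\theta)\mid s_0=s,\theta\sim b]$ over behavioral strategies. The max in $G$ is over one-stage attacker strategies $\bar\pi^A:\mathcal{S}\times\Theta\to\Delta(\mathcal{A})$ and the min over one-stage defender strategies $\bar\pi^D:\mathcal{S}\to\Delta(\mathcal{D})$; $\Delta(X)$ is the set of probability distributions on $X$. *)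

theory Defs
  imports Complex_Main
begin

definition simplex :: "('x::finite \<Rightarrow> real) set" where
  "simplex = {p. (\<forall>x. 0 \<le> p x) \<and> sum p UNIV = 1}"

text \<open>Histories: the publicly observed past (state, attacker action, defender action) triples.\<close>

definition att_strats ::
  "((('s::finite \<times> 'a::finite \<times> 'd::finite) list \<Rightarrow> 's \<Rightarrow> 't::finite \<Rightarrow> 'a \<Rightarrow> real)) set" where
  "att_strats = {\<sigma>. \<forall>h s th. \<sigma> h s th \<in> simplex}"

definition def_strats ::
  "((('s::finite \<times> 'a::finite \<times> 'd::finite) list \<Rightarrow> 's \<Rightarrow> 'd \<Rightarrow> real)) set" where
  "def_strats = {\<sigma>. \<forall>h s. \<sigma> h s \<in> simplex}"

fun horizon_payoff ::
  "('s::finite \<Rightarrow> 'a::finite \<Rightarrow> 'd::finite \<Rightarrow> 's \<Rightarrow> real) \<Rightarrow>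
   ('s \<Rightarrow> 'a \<Rightarrow> 'd \<Rightarrow> 's \<Rightarrow> 't::finite \<Rightarrow> real) \<Rightarrow> real \<Rightarrow>
   (('s \<times> 'a \<times> 'd) list \<Rightarrow> 's \<Rightarrow> 't \<Rightarrow> 'a \<Rightarrow> real) \<Rightarrow>
   (('s \<times> 'a \<times> 'd) list \<Rightarrow> 's \<Rightarrow> 'd \<Rightarrow> real) \<Rightarrow>
   nat \<Rightarrow> ('s \<times> 'a \<times> 'd) list \<Rightarrow> 's \<Rightarrow> 't \<Rightarrow> real" where
  "horizon_payoff T R \<gamma> \<sigma>A \<sigma>D 0 h s th = 0"
| "horizon_payoff T R \<gamma> \<sigma>A \<sigma>D (Suc n) h s th =
     (\<Sum>a\<in>UNIV. \<Sum>d\<in>UNIV. \<Sum>s'\<in>UNIV.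
        \<sigma>A h s th a * \<sigma>D h s d * T s a d s' *
        (R s a d s' th + \<gamma> * horizon_payoff T R \<gamma> \<sigma>A \<sigma>D n (h @ [(s, a, d)]) s' th))"

definition game_payoff where
  "game_payoff T R \<gamma> \<sigma>A \<sigma>D s b =
     (\<Sum>th\<in>UNIV. b th * lim (\<lambda>n. horizon_payoff T R \<gamma> \<sigma>A \<sigma>D n [] s th))"

definition ncirl_value where
  "ncirl_value T R \<gamma> s b =
     (SUP \<sigma>A\<in>att_strats. INF \<sigma>D\<in>def_strats. game_payoff T R \<gamma> \<sigma>A \<sigma>D s b)"

definition belief_update ::
  "('s \<Rightarrow> 't::finite \<Rightarrow> 'a \<Rightarrow> real) \<Rightarrow> 's \<Rightarrow> ('t \<Rightarrow> real) \<Rightarrow> 'a \<Rightarrow> ('t \<Rightarrow> real)" where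
  "belief_update \<pi>A s b a =
     (\<lambda>th. \<pi>A s th a * b th / (\<Sum>th'\<in>UNIV. \<pi>A s th' a * b th'))"

definition att_onestage :: "('s \<Rightarrow> 't \<Rightarrow> 'a::finite \<Rightarrow> real) set" where
  "att_onestage = {\<pi>. \<forall>s th. \<pi> s th \<in> simplex}"

definition def_onestage :: "('s \<Rightarrow> 'd::finite \<Rightarrow> real) set" where
  "def_onestage = {\<pi>. \<forall>s. \<pi> s \<in> simplex}"

definition backup ::
  "('s::finite \<Rightarrow> 'a::finite \<Rightarrow> 'd::finite \<Rightarrow> 's \<Rightarrow> real) \<Rightarrow>
   ('s \<Rightarrow> 'a \<Rightarrow> 'd \<Rightarrow> 's \<Rightarrow> 't::finite \<Rightarrow> real) \<Rightarrow> real \<Rightarrow>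
   ('s \<Rightarrow> ('t \<Rightarrow> real) \<Rightarrow> real) \<Rightarrow> ('s \<Rightarrow> ('t \<Rightarrow> real) \<Rightarrow> real)" where
  "backup T R \<gamma> v s b =
     (SUP \<pi>A\<in>att_onestage. INF \<pi>D\<in>def_onestage.
        (\<Sum>a\<in>UNIV. \<Sum>d\<in>UNIV. \<Sum>s'\<in>UNIV. \<Sum>th\<in>UNIV.
           b th * \<pi>A s th a * \<pi>D s d * T s a d s' *
           (R s a d s' th + \<gamma> * v s' (belief_update \<pi>A s b a))))"

definition bounded_vf :: "('s \<Rightarrow> ('t::finite \<Rightarrow> real) \<Rightarrow> real) \<Rightarrow> bool" where
  "bounded_vf v \<longleftrightarrow> (\<exists>B. \<forall>s. \<forall>b\<in>simplex. \<bar>v s b\<bar> \<le> B)"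

definition sup_dist ::
  "('s \<Rightarrow> ('t::finite \<Rightarrow> real) \<Rightarrow> real) \<Rightarrow> ('s \<Rightarrow> ('t \<Rightarrow> real) \<Rightarrow> real) \<Rightarrow> real" where
  "sup_dist v w = (SUP p\<in>(UNIV \<times> simplex). \<bar>v (fst p) (snd p) - w (fst p) (snd p)\<bar>)"

end

(*
  Only the continuation values of one stage of play depend on v, and they enter the
  objective of G as an average over the joint law of intent, actions and next state,
  multiplied by gamma.  So G is a gamma-contraction for the supremum distance, and its
  iterates converge geometrically to any bounded fixed point.

  The value is such a fixed point.  A behavioural strategy splits into its first-stage
  mixed action and its continuations after each public outcome (s, a, d); by Bayes' rule
  the continuation play is again the game, started at the posterior tau(s, b, a).
  Conversely, a first-stage mixed action and epsilon-optimal continuations, chosen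
  separately for every outcome, glue to one behavioural strategy.  Comparing the max-min
  over behavioural strategies with the max-min over one-stage strategies in both
  directions, up to every epsilon, gives v = G v.
*)

theory Submission
  imports Defs
begin

lemma simplex_nonneg: "p \<in> simplex \<Longrightarrow> 0 \<le> p x"
  by (simp add: simplex_def)

lemma simplex_sum: "p \<in> simplex \<Longrightarrow> sum p UNIV = 1"
  by (simp add: simplex_def)

lemma simplex_nonempty: "simplex \<noteq> {}"
proof -
  have "(\<lambda>_. 1 / real (card (UNIV :: 'x set))) \<in> (simplex :: ('x::finite \<Rightarrow> real) set)"
    by (simp add: simplex_def)
  then show ?thesis by blast
qed

lemma sum_UNIV_prod: "(\<Sum>z\<in>UNIV. g z) = (\<Sum>x\<in>UNIV. \<Sum>y\<in>UNIV. g (x, y))"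
  by (metis UNIV_Times_UNIV sum.cartesian_product')

lemma sum_rotate4:
  "(\<Sum>x\<in>A. \<Sum>y\<in>B. \<Sum>z\<in>C. \<Sum>w\<in>D. f x y z w) = (\<Sum>y\<in>B. \<Sum>z\<in>C. \<Sum>w\<in>D. \<Sum>x\<in>A. f x y z w)"
  by (simp add: sum.swap[of _ A])

lemma simplex_dependent_prod:
  assumes p: "p \<in> simplex" and q: "\<And>x. q x \<in> simplex"
  shows "(\<lambda>(x, y). p x * q x y) \<in> simplex"
proof -
  have "(\<Sum>z\<in>UNIV. (\<lambda>(x, y). p x * q x y) z) = (\<Sum>x\<in>UNIV. p x * sum (q x) UNIV)"
    by (simp add: sum_UNIV_prod sum_distrib_left)
  also have "\<dots> = 1"
    using p q by (simp add: simplex_sum)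
  finally show ?thesis
    using p q by (auto simp: simplex_def)
qed

lemma simplex_expectation_le:
  assumes p: "p \<in> simplex" and le: "\<And>x. p x \<noteq> 0 \<Longrightarrow> f x \<le> g x + e"
  shows "(\<Sum>x\<in>UNIV. p x * f x) \<le> (\<Sum>x\<in>UNIV. p x * g x) + e"
proof -
  have "p x * f x \<le> p x * (g x + e)" for x
    using le[of x] simplex_nonneg[OF p, of x] by (cases "p x = 0") (auto intro: mult_left_mono)
  then have "(\<Sum>x\<in>UNIV. p x * f x) \<le> (\<Sum>x\<in>UNIV. p x * (g x + e))"
    by (rule sum_mono)
  also have "\<dots> = (\<Sum>x\<in>UNIV. p x * g x) + e"
    using simplex_sum[OF p] by (simp add: distrib_left sum.distrib sum_distrib_right[symmetric])
  finally show ?thesis .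
qed

lemma simplex_abs_expectation_le:
  assumes p: "p \<in> simplex" and le: "\<And>x. p x \<noteq> 0 \<Longrightarrow> \<bar>f x\<bar> \<le> c"
  shows "\<bar>\<Sum>x\<in>UNIV. p x * f x\<bar> \<le> c"
  using simplex_expectation_le[OF p, of f "\<lambda>_. 0" c] simplex_expectation_le[OF p, of "\<lambda>_. 0" f c] le
  by (force simp: abs_le_iff)

lemma belief_update_simplex:
  assumes b: "b \<in> simplex" and \<pi>A: "\<pi>A \<in> att_onestage" and pos: "b th * \<pi>A s th a \<noteq> 0"
  shows "belief_update \<pi>A s b a \<in> simplex"
proof -
  have nonneg: "0 \<le> \<pi>A s th' a * b th'" for th'
    using b \<pi>A by (simp add: att_onestage_def simplex_nonneg)
  have "0 < \<pi>A s th a * b th"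
    using pos nonneg[of th] by (simp add: mult.commute order_le_less)
  then have "0 < (\<Sum>th'\<in>UNIV. \<pi>A s th' a * b th')"
    using nonneg by (intro sum_pos2[of UNIV th]) auto
  then show ?thesis
    using nonneg
    by (auto simp: simplex_def belief_update_def sum_divide_distrib[symmetric]
        intro: divide_nonneg_pos)
qed

lemma sum_belief_update:
  assumes b: "b \<in> simplex" and \<pi>A: "\<pi>A \<in> att_onestage"
  shows "(\<Sum>th\<in>UNIV. b th * \<pi>A s th a * X th)
    = (\<Sum>th\<in>UNIV. b th * \<pi>A s th a) * (\<Sum>th\<in>UNIV. belief_update \<pi>A s b a th * X th)"
proof (cases "(\<Sum>th\<in>UNIV. b th * \<pi>A s th a) = 0")
  case True
  moreover have "0 \<le> b th * \<pi>A s th a" for th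
    using b \<pi>A by (simp add: att_onestage_def simplex_nonneg)
  ultimately have "b th * \<pi>A s th a = 0" for th
    by (simp add: sum_nonneg_eq_0_iff)
  then have "(\<Sum>th\<in>UNIV. b th * \<pi>A s th a * X th) = 0"
    by (simp add: sum.neutral)
  with True show ?thesis by simp
next
  case False
  let ?p = "\<Sum>th\<in>UNIV. b th * \<pi>A s th a"
  have "?p * (\<Sum>th\<in>UNIV. belief_update \<pi>A s b a th * X th)
      = (\<Sum>th\<in>UNIV. ?p * (b th * \<pi>A s th a / ?p) * X th)"
    by (simp add: belief_update_def sum_distrib_left mult.commute mult.left_commute)
  also have "\<dots> = (\<Sum>th\<in>UNIV. b th * \<pi>A s th a * X th)"
    using False by simp
  finally show ?thesis ..
qed

lemma sum_posterior_mean: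
  assumes "b \<in> simplex" and "\<pi>A \<in> att_onestage"
  shows "(\<Sum>th\<in>UNIV. b th * \<pi>A s th a * k1 * k2 * (r th + g * X th))
    = (\<Sum>th\<in>UNIV. b th * \<pi>A s th a * k1 * k2 *
         (r th + g * (\<Sum>th'\<in>UNIV. belief_update \<pi>A s b a th' * X th')))"
proof -
  have linear: "(\<Sum>th\<in>UNIV. b th * \<pi>A s th a * k1 * k2 * (r th + g * Y th))
      = (\<Sum>th\<in>UNIV. b th * \<pi>A s th a * k1 * k2 * r th)
        + g * k1 * k2 * (\<Sum>th\<in>UNIV. b th * \<pi>A s th a * Y th)" for Y
    by (simp add: algebra_simps sum.distrib sum_distrib_left)
  have "(\<Sum>th\<in>UNIV. b th * \<pi>A s th a * X th)
      = (\<Sum>th\<in>UNIV. b th * \<pi>A s th a * (\<Sum>th'\<in>UNIV. belief_update \<pi>A s b a th' * X th'))"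
    using sum_belief_update[OF assms] by (simp add: sum_distrib_right)
  then show ?thesis
    by (simp only: linear)
qed

lemma abs_add_scaled_le:
  fixes x y :: real
  assumes "\<bar>x\<bar> \<le> M" and "\<bar>y\<bar> \<le> B" and "0 \<le> c"
  shows "\<bar>x + c * y\<bar> \<le> M + c * B"
proof -
  have "\<bar>c * y\<bar> \<le> c * B"
    using mult_left_mono[OF assms(2,3)] assms(3) by (simp add: abs_mult)
  then show ?thesis
    using assms(1) abs_triangle_ineq[of x "c * y"] by linarith
qed

lemma bdd_above_if_abs_le: "(\<And>y. y \<in> B \<Longrightarrow> \<bar>f y\<bar> \<le> (c::real)) \<Longrightarrow> bdd_above (f ` B)"
  by (rule bdd_aboveI2[of _ _ c]) (auto simp: abs_le_iff)

lemma bdd_below_if_abs_le: "(\<And>y. y \<in> B \<Longrightarrow> \<bar>f y\<bar> \<le> (c::real)) \<Longrightarrow> bdd_below (f ` B)"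
  by (rule bdd_belowI2[of _ "-c"]) (metis abs_le_D2 minus_le_iff)

lemma abs_INF_le:
  assumes "B \<noteq> {}" and bound: "\<And>y. y \<in> B \<Longrightarrow> \<bar>f y\<bar> \<le> (c::real)"
  shows "\<bar>INF y\<in>B. f y\<bar> \<le> c"
proof -
  obtain y where y: "y \<in> B" using assms(1) by blast
  have "(INF y\<in>B. f y) \<le> f y"
    by (rule cINF_lower[OF bdd_below_if_abs_le[OF bound] y])
  moreover have "-c \<le> (INF y\<in>B. f y)"
    by (rule cINF_greatest[OF assms(1)]) (metis bound abs_le_iff minus_le_iff)
  ultimately show ?thesis
    using bound[OF y] by (simp add: abs_le_iff)
qed

lemma abs_SUP_le:
  assumes "A \<noteq> {}" and bound: "\<And>x. x \<in> A \<Longrightarrow> \<bar>f x\<bar> \<le> (c::real)"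
  shows "\<bar>SUP x\<in>A. f x\<bar> \<le> c"
proof -
  obtain x where x: "x \<in> A" using assms(1) by blast
  have "f x \<le> (SUP x\<in>A. f x)"
    by (rule cSUP_upper[OF x bdd_above_if_abs_le[OF bound]])
  moreover have "(SUP x\<in>A. f x) \<le> c"
    by (rule cSUP_least[OF assms(1)]) (metis bound abs_le_iff)
  ultimately show ?thesis
    using bound[OF x] by (simp add: abs_le_iff)
qed

lemma SUP_INF_le_add:
  assumes A: "A \<noteq> {}" and B: "B \<noteq> {}"
    and f: "\<And>x y. x \<in> A \<Longrightarrow> y \<in> B \<Longrightarrow> \<bar>f x y\<bar> \<le> (c::real)"
    and g: "\<And>x y. x \<in> A \<Longrightarrow> y \<in> B \<Longrightarrow> \<bar>g x y\<bar> \<le> c"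
    and le: "\<And>x y. x \<in> A \<Longrightarrow> y \<in> B \<Longrightarrow> f x y \<le> g x y + \<delta>"
  shows "(SUP x\<in>A. INF y\<in>B. f x y) \<le> (SUP x\<in>A. INF y\<in>B. g x y) + \<delta>"
proof (rule cSUP_least[OF A])
  fix x assume x: "x \<in> A"
  have "(INF y\<in>B. f x y) - \<delta> \<le> (INF y\<in>B. g x y)"
  proof (rule cINF_greatest[OF B])
    fix y assume y: "y \<in> B"
    have "(INF y\<in>B. f x y) \<le> f x y"
      by (rule cINF_lower[OF bdd_below_if_abs_le[OF f[OF x]] y])
    then show "(INF y\<in>B. f x y) - \<delta> \<le> g x y"
      using le[OF x y] by linarith
  qed
  moreover have "(INF y\<in>B. g x y) \<le> (SUP x\<in>A. INF y\<in>B. g x y)"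
    by (rule cSUP_upper[OF x bdd_above_if_abs_le[OF abs_INF_le[OF B g]]])
  ultimately show "(INF y\<in>B. f x y) \<le> (SUP x\<in>A. INF y\<in>B. g x y) + \<delta>"
    by linarith
qed

lemma abs_SUP_INF_diff_le:
  assumes A: "A \<noteq> {}" and B: "B \<noteq> {}"
    and f: "\<And>x y. x \<in> A \<Longrightarrow> y \<in> B \<Longrightarrow> \<bar>f x y\<bar> \<le> (c::real)"
    and fg: "\<And>x y. x \<in> A \<Longrightarrow> y \<in> B \<Longrightarrow> \<bar>f x y - g x y\<bar> \<le> \<delta>"
  shows "\<bar>(SUP x\<in>A. INF y\<in>B. f x y) - (SUP x\<in>A. INF y\<in>B. g x y)\<bar> \<le> \<delta>"
proof -
  have "0 \<le> \<delta>"
    using A B fg by (meson abs_ge_zero all_not_in_conv order_trans)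
  then have f': "\<bar>f x y\<bar> \<le> c + \<delta>" and g: "\<bar>g x y\<bar> \<le> c + \<delta>" if "x \<in> A" "y \<in> B" for x y
    using f[OF that] fg[OF that] by linarith+
  have le: "f x y \<le> g x y + \<delta>" "g x y \<le> f x y + \<delta>" if "x \<in> A" "y \<in> B" for x y
    using fg[OF that] by (auto simp: abs_le_iff)
  have "(SUP x\<in>A. INF y\<in>B. f x y) \<le> (SUP x\<in>A. INF y\<in>B. g x y) + \<delta>"
    by (rule SUP_INF_le_add[OF A B, where c="c + \<delta>"]) (simp_all add: f' g le)
  moreover have "(SUP x\<in>A. INF y\<in>B. g x y) \<le> (SUP x\<in>A. INF y\<in>B. f x y) + \<delta>"
    by (rule SUP_INF_le_add[OF A B, where c="c + \<delta>"]) (simp_all add: f' g le)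
  ultimately show ?thesis
    by linarith
qed

lemma convergent_if_geometric_increments:
  fixes f :: "nat \<Rightarrow> real"
  assumes q: "0 \<le> q" "q < 1" and increments: "\<And>n. \<bar>f (Suc n) - f n\<bar> \<le> M * q ^ n"
  shows "convergent f"
proof -
  have "summable (\<lambda>n. f (Suc n) - f n)"
    by (rule summable_comparison_test'[of "\<lambda>n. M * q ^ n"])
       (use q increments in \<open>auto intro: summable_mult summable_geometric\<close>)
  then have "convergent (\<lambda>n. f n - f 0)"
    by (simp add: summable_iff_convergent sum_lessThan_telescope)
  then show ?thesis
    using convergent_add_const_right_iff[of f "- f 0"] by simp
qed

lemma bounded_vfE:
  assumes "bounded_vf v"
  obtains B where "\<And>s b. b \<in> simplex \<Longrightarrow> \<bar>v s b\<bar> \<le> B"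
  using assms unfolding bounded_vf_def by blast

lemma sup_dist_upper:
  fixes v w :: "'s \<Rightarrow> ('t::finite \<Rightarrow> real) \<Rightarrow> real"
  assumes v: "bounded_vf v" and w: "bounded_vf w" and b: "b \<in> simplex"
  shows "\<bar>v s b - w s b\<bar> \<le> sup_dist v w"
proof -
  obtain Bv where Bv: "\<And>s b. b \<in> simplex \<Longrightarrow> \<bar>v s b\<bar> \<le> Bv" using bounded_vfE[OF v] by blast
  obtain Bw where Bw: "\<And>s b. b \<in> simplex \<Longrightarrow> \<bar>w s b\<bar> \<le> Bw" using bounded_vfE[OF w] by blast
  have "bdd_above ((\<lambda>p. \<bar>v (fst p) (snd p) - w (fst p) (snd p)\<bar>) ` (UNIV \<times> simplex))"
  proof (rule bdd_aboveI2)
    fix p :: "'s \<times> ('t \<Rightarrow> real)" assume "p \<in> UNIV \<times> simplex"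
    then show "\<bar>v (fst p) (snd p) - w (fst p) (snd p)\<bar> \<le> Bv + Bw"
      using Bv[of "snd p" "fst p"] Bw[of "snd p" "fst p"] by auto
  qed
  from cSUP_upper[OF _ this, of "(s, b)"] b show ?thesis
    by (simp add: sup_dist_def)
qed

lemma sup_dist_least:
  assumes "\<And>s b. b \<in> simplex \<Longrightarrow> \<bar>v s b - w s b\<bar> \<le> c"
  shows "sup_dist v w \<le> c"
  unfolding sup_dist_def using assms simplex_nonempty by (intro cSUP_least) auto

lemma sup_dist_nonneg: "bounded_vf v \<Longrightarrow> bounded_vf w \<Longrightarrow> 0 \<le> sup_dist v w"
  using simplex_nonempty sup_dist_upper by (metis abs_ge_zero equals0I order_trans)

lemma sup_dist_cong_right:
  "(\<And>s b. b \<in> simplex \<Longrightarrow> w s b = w' s b) \<Longrightarrow> sup_dist v w = sup_dist v w'"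
  unfolding sup_dist_def by (intro SUP_cong) auto

lemma contraction_iterates_tendsto:
  fixes G :: "('s \<Rightarrow> ('t::finite \<Rightarrow> real) \<Rightarrow> real) \<Rightarrow> ('s \<Rightarrow> ('t \<Rightarrow> real) \<Rightarrow> real)"
  assumes L: "0 \<le> L" "L < 1"
    and contraction: "\<And>v w. bounded_vf v \<Longrightarrow> bounded_vf w \<Longrightarrow>
          bounded_vf (G v) \<and> sup_dist (G v) (G w) \<le> L * sup_dist v w"
    and u: "bounded_vf u" and fixed: "\<And>s b. b \<in> simplex \<Longrightarrow> G u s b = u s b"
    and v0: "bounded_vf v0"
  shows "(\<lambda>n. sup_dist ((G ^^ n) v0) u) \<longlonglongrightarrow> 0"
proof -
  have bounded: "bounded_vf ((G ^^ n) v0)" for n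
    by (induction n) (use v0 contraction in auto)
  have le: "sup_dist ((G ^^ n) v0) u \<le> L ^ n * sup_dist v0 u" for n
  proof (induction n)
    case (Suc n)
    have "sup_dist ((G ^^ Suc n) v0) u = sup_dist (G ((G ^^ n) v0)) (G u)"
      by (simp add: sup_dist_cong_right[where w="G u" and w'=u, OF fixed])
    also have "\<dots> \<le> L * sup_dist ((G ^^ n) v0) u"
      using contraction[OF bounded u] by blast
    also have "\<dots> \<le> L * (L ^ n * sup_dist v0 u)"
      by (rule mult_left_mono[OF Suc.IH L(1)])
    finally show ?case by (simp add: mult.assoc)
  qed simp
  have lim: "(\<lambda>n. L ^ n * sup_dist v0 u) \<longlonglongrightarrow> 0"
    using L by (intro tendsto_mult_left_zero LIMSEQ_power_zero) simp
  show ?thesis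
  proof (rule tendsto_sandwich[OF _ _ tendsto_const lim])
    show "\<forall>\<^sub>F n in sequentially. 0 \<le> sup_dist ((G ^^ n) v0) u"
      using sup_dist_nonneg[OF bounded u] by simp
    show "\<forall>\<^sub>F n in sequentially. sup_dist ((G ^^ n) v0) u \<le> L ^ n * sup_dist v0 u"
      using le by simp
  qed
qed

section \<open>Behavioural strategies\<close>

lemma guarded_choice:
  assumes "Y \<noteq> {}" and "\<forall>a d s'. Q a d s' \<longrightarrow> (\<exists>y\<in>Y. P a d s' y)"
  obtains c where "\<And>a d s'. c a d s' \<in> Y" and "\<And>a d s'. Q a d s' \<Longrightarrow> P a d s' (c a d s')"
proof -
  define c where "c a d s' = (SOME y. y \<in> Y \<and> (Q a d s' \<longrightarrow> P a d s' y))" for a d s'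
  have "c a d s' \<in> Y \<and> (Q a d s' \<longrightarrow> P a d s' (c a d s'))" for a d s'
    unfolding c_def by (rule someI_ex) (use assms in \<open>cases "Q a d s'"; blast\<close>)
  then show thesis
    using that by blast
qed

lemma att_strats_nonempty: "att_strats \<noteq> {}"
  using simplex_nonempty by (force simp: att_strats_def)

lemma def_strats_nonempty: "def_strats \<noteq> {}"
  using simplex_nonempty by (force simp: def_strats_def)

lemma att_onestage_nonempty: "att_onestage \<noteq> {}"
  using simplex_nonempty by (force simp: att_onestage_def)

lemma def_onestage_nonempty: "def_onestage \<noteq> {}"
  using simplex_nonempty by (force simp: def_onestage_def)

definition continuation :: "'h \<Rightarrow> ('h list \<Rightarrow> 'z) \<Rightarrow> 'h list \<Rightarrow> 'z" where
  "continuation x \<sigma> = (\<lambda>h. \<sigma> (x # h))"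

definition first_state :: "('s \<times> 'a \<times> 'd) list \<Rightarrow> 's \<Rightarrow> 's" where
  "first_state h s = (case h of [] \<Rightarrow> s | x # _ \<Rightarrow> fst x)"

text \<open>After the first-stage outcome \<open>(_, a, d)\<close>, \<open>glue \<pi> c\<close> plays \<open>c a d s'\<close>, where \<open>s'\<close> is
  the state reached by that stage, i.e. the first state of the remaining history.\<close>

definition glue ::
  "('s \<Rightarrow> 'z) \<Rightarrow> ('a \<Rightarrow> 'd \<Rightarrow> 's \<Rightarrow> ('s \<times> 'a \<times> 'd) list \<Rightarrow> 's \<Rightarrow> 'z) \<Rightarrow>
   ('s \<times> 'a \<times> 'd) list \<Rightarrow> 's \<Rightarrow> 'z" where
  "glue \<pi> c h s = (case h of [] \<Rightarrow> \<pi> s | (_, a, d) # h' \<Rightarrow> c a d (first_state h' s) h' s)"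

lemma glue_Nil [simp]: "glue \<pi> c [] = \<pi>"
  by (simp add: glue_def fun_eq_iff)

lemma continuation_glue: "continuation (s, a, d) (glue \<pi> c) h x = c a d (first_state h x) h x"
  by (simp add: continuation_def glue_def)

lemma att_strats_continuation: "\<sigma> \<in> att_strats \<Longrightarrow> continuation x \<sigma> \<in> att_strats"
  by (simp add: att_strats_def continuation_def)

lemma def_strats_continuation: "\<sigma> \<in> def_strats \<Longrightarrow> continuation x \<sigma> \<in> def_strats"
  by (simp add: def_strats_def continuation_def)

lemma att_onestage_Nil: "\<sigma> \<in> att_strats \<Longrightarrow> \<sigma> [] \<in> att_onestage"
  by (simp add: att_strats_def att_onestage_def)

lemma def_onestage_Nil: "\<sigma> \<in> def_strats \<Longrightarrow> \<sigma> [] \<in> def_onestage"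
  by (simp add: def_strats_def def_onestage_def)

lemma att_strats_glue:
  "\<pi> \<in> att_onestage \<Longrightarrow> (\<And>a d s'. c a d s' \<in> att_strats) \<Longrightarrow> glue \<pi> c \<in> att_strats"
  by (auto simp: att_strats_def att_onestage_def glue_def split: list.split)

lemma def_strats_glue:
  "\<pi> \<in> def_onestage \<Longrightarrow> (\<And>a d s'. c a d s' \<in> def_strats) \<Longrightarrow> glue \<pi> c \<in> def_strats"
  by (auto simp: def_strats_def def_onestage_def glue_def split: list.split)

locale ncirl_game =
  fixes T :: "'s::finite \<Rightarrow> 'a::finite \<Rightarrow> 'd::finite \<Rightarrow> 's \<Rightarrow> real"
    and R :: "'s \<Rightarrow> 'a \<Rightarrow> 'd \<Rightarrow> 's \<Rightarrow> 't::finite \<Rightarrow> real"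
    and \<gamma> :: real
  assumes T_simplex: "T s a d \<in> simplex"
    and gamma_nonneg: "0 \<le> \<gamma>"
    and gamma_less_1: "\<gamma> < 1"
begin

definition reward_bound :: real where
  "reward_bound = Max (range (\<lambda>(s, a, d, s', th). \<bar>R s a d s' th\<bar>))"

definition value_bound :: real where
  "value_bound = reward_bound / (1 - \<gamma>)"

lemma abs_R_le_reward_bound: "\<bar>R s a d s' th\<bar> \<le> reward_bound"
  unfolding reward_bound_def by (rule Max_ge) (auto intro: image_eqI[where x="(s, a, d, s', th)"])

lemma value_bound_nonneg: "0 \<le> value_bound"
  using order_trans[OF abs_ge_zero abs_R_le_reward_bound] gamma_less_1
  by (simp add: value_bound_def)

lemma reward_bound_add_value_bound: "reward_bound + \<gamma> * value_bound = value_bound"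
  using gamma_less_1 by (simp add: value_bound_def field_simps)

lemma gamma_mult_le: "0 \<le> e \<Longrightarrow> \<gamma> * e \<le> e"
  using gamma_nonneg gamma_less_1 by (simp add: mult_left_le_one_le)

definition step_prob ::
  "('s \<Rightarrow> 't \<Rightarrow> 'a \<Rightarrow> real) \<Rightarrow> ('s \<Rightarrow> 'd \<Rightarrow> real) \<Rightarrow> 's \<Rightarrow> 't \<Rightarrow> 'a \<times> 'd \<times> 's \<Rightarrow> real" where
  "step_prob \<pi>A \<pi>D s th = (\<lambda>(a, y). \<pi>A s th a * (case y of (d, s') \<Rightarrow> \<pi>D s d * T s a d s'))"

lemma step_prob_simplex:
  assumes "\<pi>A \<in> att_onestage" and "\<pi>D \<in> def_onestage"
  shows "step_prob \<pi>A \<pi>D s th \<in> simplex"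
  unfolding step_prob_def
  using assms by (intro simplex_dependent_prod T_simplex)
    (simp_all add: att_onestage_def def_onestage_def)

lemma horizon_payoff_Cons:
  "horizon_payoff T R \<gamma> \<sigma>A \<sigma>D n (x # h) s th
    = horizon_payoff T R \<gamma> (continuation x \<sigma>A) (continuation x \<sigma>D) n h s th"
  by (induction n arbitrary: h s) (simp_all add: continuation_def)

lemma horizon_payoff_Suc_Nil:
  "horizon_payoff T R \<gamma> \<sigma>A \<sigma>D (Suc n) [] s th =
    (\<Sum>a\<in>UNIV. \<Sum>d\<in>UNIV. \<Sum>s'\<in>UNIV. \<sigma>A [] s th a * \<sigma>D [] s d * T s a d s' *
       (R s a d s' th + \<gamma> * horizon_payoff T R \<gamma>
          (continuation (s, a, d) \<sigma>A) (continuation (s, a, d) \<sigma>D) n [] s' th))"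
  by (simp add: horizon_payoff_Cons)

lemma horizon_payoff_Suc_expectation:
  "horizon_payoff T R \<gamma> \<sigma>A \<sigma>D (Suc n) [] s th =
    (\<Sum>x\<in>UNIV. step_prob (\<sigma>A []) (\<sigma>D []) s th x *
       (case x of (a, d, s') \<Rightarrow> R s a d s' th + \<gamma> * horizon_payoff T R \<gamma>
          (continuation (s, a, d) \<sigma>A) (continuation (s, a, d) \<sigma>D) n [] s' th))"
  by (simp add: horizon_payoff_Cons sum_UNIV_prod step_prob_def mult.assoc)

lemma abs_horizon_payoff_le:
  assumes "\<sigma>A \<in> att_strats" and "\<sigma>D \<in> def_strats"
  shows "\<bar>horizon_payoff T R \<gamma> \<sigma>A \<sigma>D n [] s th\<bar> \<le> value_bound"
  using assms
proof (induction n arbitrary: \<sigma>A \<sigma>D s)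
  case (Suc n)
  have "\<bar>R s a d s' th + \<gamma> * horizon_payoff T R \<gamma>
          (continuation (s, a, d) \<sigma>A) (continuation (s, a, d) \<sigma>D) n [] s' th\<bar>
        \<le> reward_bound + \<gamma> * value_bound" for a d s'
    using Suc by (intro abs_add_scaled_le abs_R_le_reward_bound gamma_nonneg)
      (simp add: att_strats_continuation def_strats_continuation)
  then have "\<bar>horizon_payoff T R \<gamma> \<sigma>A \<sigma>D (Suc n) [] s th\<bar> \<le> reward_bound + \<gamma> * value_bound"
    unfolding horizon_payoff_Suc_expectation
    by (intro simplex_abs_expectation_le step_prob_simplex att_onestage_Nil def_onestage_Nil
        Suc.prems) (simp add: split_beta)
  then show ?case
    by (simp add: reward_bound_add_value_bound)
qed (simp add: value_bound_nonneg)

lemma abs_horizon_payoff_Suc_diff_le: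
  assumes "\<sigma>A \<in> att_strats" and "\<sigma>D \<in> def_strats"
  shows "\<bar>horizon_payoff T R \<gamma> \<sigma>A \<sigma>D (Suc n) [] s th - horizon_payoff T R \<gamma> \<sigma>A \<sigma>D n [] s th\<bar>
    \<le> reward_bound * \<gamma> ^ n"
  using assms
proof (induction n arbitrary: \<sigma>A \<sigma>D s)
  case 0
  have "\<bar>horizon_payoff T R \<gamma> \<sigma>A \<sigma>D (Suc 0) [] s th\<bar> \<le> reward_bound"
    unfolding horizon_payoff_Suc_expectation
    by (intro simplex_abs_expectation_le step_prob_simplex att_onestage_Nil def_onestage_Nil 0)
      (simp add: split_beta abs_R_le_reward_bound)
  then show ?case by simp
next
  case (Suc n)
  let ?H = "\<lambda>m a d s'. horizon_payoff T R \<gamma>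
    (continuation (s, a, d) \<sigma>A) (continuation (s, a, d) \<sigma>D) m [] s' th"
  have "horizon_payoff T R \<gamma> \<sigma>A \<sigma>D (Suc (Suc n)) [] s th
      - horizon_payoff T R \<gamma> \<sigma>A \<sigma>D (Suc n) [] s th
    = (\<Sum>x\<in>UNIV. step_prob (\<sigma>A []) (\<sigma>D []) s th x *
         (case x of (a, d, s') \<Rightarrow> \<gamma> * (?H (Suc n) a d s' - ?H n a d s')))"
    unfolding horizon_payoff_Suc_expectation[of _ _ "Suc n"]
      horizon_payoff_Suc_expectation[of _ _ n] sum_subtractf[symmetric]
    by (rule sum.cong) (simp_all add: split_beta algebra_simps)
  also have "\<bar>\<dots>\<bar> \<le> \<gamma> * (reward_bound * \<gamma> ^ n)"
    using Suc gamma_nonneg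
    by (intro simplex_abs_expectation_le step_prob_simplex att_onestage_Nil def_onestage_Nil)
      (auto simp: split_beta abs_mult att_strats_continuation def_strats_continuation
        intro: mult_left_mono)
  finally show ?case
    by (simp add: mult_ac)
qed

definition intent_payoff where
  "intent_payoff \<sigma>A \<sigma>D s th = lim (\<lambda>n. horizon_payoff T R \<gamma> \<sigma>A \<sigma>D n [] s th)"

lemma horizon_payoff_tendsto:
  assumes "\<sigma>A \<in> att_strats" and "\<sigma>D \<in> def_strats"
  shows "(\<lambda>n. horizon_payoff T R \<gamma> \<sigma>A \<sigma>D n [] s th) \<longlonglongrightarrow> intent_payoff \<sigma>A \<sigma>D s th"
  using convergent_if_geometric_increments[OF gamma_nonneg gamma_less_1
      abs_horizon_payoff_Suc_diff_le[OF assms, where s=s and th=th]]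
  by (simp add: intent_payoff_def convergent_LIMSEQ_iff)

lemma abs_intent_payoff_le:
  assumes "\<sigma>A \<in> att_strats" and "\<sigma>D \<in> def_strats"
  shows "\<bar>intent_payoff \<sigma>A \<sigma>D s th\<bar> \<le> value_bound"
  by (rule LIMSEQ_le_const2[OF tendsto_rabs[OF horizon_payoff_tendsto[OF assms]]])
    (use abs_horizon_payoff_le[OF assms] in auto)

lemma intent_payoff_rec:
  assumes "\<sigma>A \<in> att_strats" and "\<sigma>D \<in> def_strats"
  shows "intent_payoff \<sigma>A \<sigma>D s th =
    (\<Sum>a\<in>UNIV. \<Sum>d\<in>UNIV. \<Sum>s'\<in>UNIV. \<sigma>A [] s th a * \<sigma>D [] s d * T s a d s' *
       (R s a d s' th + \<gamma> *
          intent_payoff (continuation (s, a, d) \<sigma>A) (continuation (s, a, d) \<sigma>D) s' th))"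
proof (rule LIMSEQ_unique)
  show "(\<lambda>n. horizon_payoff T R \<gamma> \<sigma>A \<sigma>D (Suc n) [] s th) \<longlonglongrightarrow> intent_payoff \<sigma>A \<sigma>D s th"
    by (rule LIMSEQ_Suc[OF horizon_payoff_tendsto[OF assms]])
  show "(\<lambda>n. horizon_payoff T R \<gamma> \<sigma>A \<sigma>D (Suc n) [] s th) \<longlonglongrightarrow>
    (\<Sum>a\<in>UNIV. \<Sum>d\<in>UNIV. \<Sum>s'\<in>UNIV. \<sigma>A [] s th a * \<sigma>D [] s d * T s a d s' *
       (R s a d s' th + \<gamma> *
          intent_payoff (continuation (s, a, d) \<sigma>A) (continuation (s, a, d) \<sigma>D) s' th))"
    unfolding horizon_payoff_Suc_Nil
    using assms by (intro tendsto_intros horizon_payoff_tendsto att_strats_continuation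
        def_strats_continuation)
qed

lemma game_payoff_eq_intent_payoff:
  "game_payoff T R \<gamma> \<sigma>A \<sigma>D s b = (\<Sum>th\<in>UNIV. b th * intent_payoff \<sigma>A \<sigma>D s th)"
  by (simp add: game_payoff_def intent_payoff_def)

lemma game_payoff_cong_first_state:
  assumes "\<And>h x. first_state h x = s \<Longrightarrow> \<sigma>A h x = \<sigma>A' h x"
    and "\<And>h x. first_state h x = s \<Longrightarrow> \<sigma>D h x = \<sigma>D' h x"
  shows "game_payoff T R \<gamma> \<sigma>A \<sigma>D s b = game_payoff T R \<gamma> \<sigma>A' \<sigma>D' s b"
proof -
  have "\<sigma>A [] s = \<sigma>A' [] s" "\<sigma>D [] s = \<sigma>D' [] s"
    "continuation (s, a, d) \<sigma>A = continuation (s, a, d) \<sigma>A'"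
    "continuation (s, a, d) \<sigma>D = continuation (s, a, d) \<sigma>D'" for a d
    using assms by (auto simp: continuation_def first_state_def fun_eq_iff)
  then have "horizon_payoff T R \<gamma> \<sigma>A \<sigma>D n [] s th = horizon_payoff T R \<gamma> \<sigma>A' \<sigma>D' n [] s th" for n th
    by (cases n) (simp_all add: horizon_payoff_Suc_Nil del: horizon_payoff.simps(2))
  then show ?thesis
    by (simp add: game_payoff_def)
qed

lemma game_payoff_continuation_glue_attacker:
  "game_payoff T R \<gamma> (continuation (s, a, d) (glue \<pi> c)) \<sigma>D s' b
    = game_payoff T R \<gamma> (c a d s') \<sigma>D s' b"
  by (rule game_payoff_cong_first_state) (simp_all add: continuation_glue)

lemma game_payoff_continuation_glue_defender:
  "game_payoff T R \<gamma> \<sigma>A (continuation (s, a, d) (glue \<pi> c)) s' b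
    = game_payoff T R \<gamma> \<sigma>A (c a d s') s' b"
  by (rule game_payoff_cong_first_state) (simp_all add: continuation_glue)

subsection \<open>One-stage decomposition\<close>

definition stage_payoff ::
  "('s \<Rightarrow> 't \<Rightarrow> 'a \<Rightarrow> real) \<Rightarrow> ('s \<Rightarrow> 'd \<Rightarrow> real) \<Rightarrow> 's \<Rightarrow> ('t \<Rightarrow> real) \<Rightarrow>
   ('a \<Rightarrow> 'd \<Rightarrow> 's \<Rightarrow> real) \<Rightarrow> real" where
  "stage_payoff \<pi>A \<pi>D s b C =
    (\<Sum>a\<in>UNIV. \<Sum>d\<in>UNIV. \<Sum>s'\<in>UNIV. \<Sum>th\<in>UNIV.
       b th * \<pi>A s th a * \<pi>D s d * T s a d s' * (R s a d s' th + \<gamma> * C a d s'))"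

abbreviation stage_value where
  "stage_value \<pi>A \<pi>D s b v \<equiv> stage_payoff \<pi>A \<pi>D s b (\<lambda>a d s'. v s' (belief_update \<pi>A s b a))"

lemma backup_eq_SUP_INF_stage_value:
  "backup T R \<gamma> v s b = (SUP \<pi>A\<in>att_onestage. INF \<pi>D\<in>def_onestage. stage_value \<pi>A \<pi>D s b v)"
  by (simp add: backup_def stage_payoff_def)

definition joint_prob ::
  "('s \<Rightarrow> 't \<Rightarrow> 'a \<Rightarrow> real) \<Rightarrow> ('s \<Rightarrow> 'd \<Rightarrow> real) \<Rightarrow> 's \<Rightarrow> ('t \<Rightarrow> real) \<Rightarrow>
   't \<times> 'a \<times> 'd \<times> 's \<Rightarrow> real" where
  "joint_prob \<pi>A \<pi>D s b = (\<lambda>(th, x). b th * step_prob \<pi>A \<pi>D s th x)"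

lemma joint_prob_simplex:
  "\<pi>A \<in> att_onestage \<Longrightarrow> \<pi>D \<in> def_onestage \<Longrightarrow> b \<in> simplex \<Longrightarrow> joint_prob \<pi>A \<pi>D s b \<in> simplex"
  unfolding joint_prob_def by (intro simplex_dependent_prod step_prob_simplex)

lemma stage_payoff_eq_expectation:
  "stage_payoff \<pi>A \<pi>D s b C = (\<Sum>z\<in>UNIV. joint_prob \<pi>A \<pi>D s b z *
     (case z of (th, a, d, s') \<Rightarrow> R s a d s' th + \<gamma> * C a d s'))"
proof -
  have "stage_payoff \<pi>A \<pi>D s b C = (\<Sum>th\<in>UNIV. \<Sum>a\<in>UNIV. \<Sum>d\<in>UNIV. \<Sum>s'\<in>UNIV.
      b th * \<pi>A s th a * \<pi>D s d * T s a d s' * (R s a d s' th + \<gamma> * C a d s'))"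
    unfolding stage_payoff_def by (rule sum_rotate4[symmetric])
  then show ?thesis
    by (simp add: sum_UNIV_prod joint_prob_def step_prob_def mult.assoc)
qed

text \<open>An action \<open>a\<close> has positive probability iff \<open>belief_update \<pi>A s b a\<close> is a
  distribution (otherwise the update is \<open>0 / 0 = 0\<close>), so only continuation values at
  reachable posteriors matter.\<close>

lemma stage_payoff_le:
  assumes \<pi>A: "\<pi>A \<in> att_onestage" and \<pi>D: "\<pi>D \<in> def_onestage" and b: "b \<in> simplex"
    and le: "\<And>a d s'. belief_update \<pi>A s b a \<in> simplex \<Longrightarrow> C1 a d s' \<le> C2 a d s' + e"
  shows "stage_payoff \<pi>A \<pi>D s b C1 \<le> stage_payoff \<pi>A \<pi>D s b C2 + \<gamma> * e"
proof -
  have "R s a d s' th + \<gamma> * C1 a d s' \<le> R s a d s' th + \<gamma> * C2 a d s' + \<gamma> * e"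
    if "joint_prob \<pi>A \<pi>D s b (th, a, d, s') \<noteq> 0" for th a d s'
  proof -
    have "b th * \<pi>A s th a \<noteq> 0"
      using that by (auto simp: joint_prob_def step_prob_def)
    then have "C1 a d s' \<le> C2 a d s' + e"
      using le belief_update_simplex[OF b \<pi>A] by blast
    then show ?thesis
      using mult_left_mono[OF _ gamma_nonneg] by (simp add: distrib_left[symmetric])
  qed
  then show ?thesis
    unfolding stage_payoff_eq_expectation
    by (intro simplex_expectation_le joint_prob_simplex \<pi>A \<pi>D b) (auto split: prod.splits)
qed

lemma abs_stage_payoff_le:
  assumes \<pi>A: "\<pi>A \<in> att_onestage" and \<pi>D: "\<pi>D \<in> def_onestage" and b: "b \<in> simplex"
    and bound: "\<And>a d s'. belief_update \<pi>A s b a \<in> simplex \<Longrightarrow> \<bar>C a d s'\<bar> \<le> B"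
  shows "\<bar>stage_payoff \<pi>A \<pi>D s b C\<bar> \<le> reward_bound + \<gamma> * B"
proof -
  have "\<bar>R s a d s' th + \<gamma> * C a d s'\<bar> \<le> reward_bound + \<gamma> * B"
    if "joint_prob \<pi>A \<pi>D s b (th, a, d, s') \<noteq> 0" for th a d s'
  proof -
    have "b th * \<pi>A s th a \<noteq> 0"
      using that by (auto simp: joint_prob_def step_prob_def)
    then have "\<bar>C a d s'\<bar> \<le> B"
      using bound belief_update_simplex[OF b \<pi>A] by blast
    then show ?thesis
      by (intro abs_add_scaled_le abs_R_le_reward_bound gamma_nonneg)
  qed
  then show ?thesis
    unfolding stage_payoff_eq_expectation
    by (intro simplex_abs_expectation_le joint_prob_simplex \<pi>A \<pi>D b) (auto split: prod.splits)
qed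

lemma abs_stage_payoff_diff_le:
  assumes \<pi>A: "\<pi>A \<in> att_onestage" and \<pi>D: "\<pi>D \<in> def_onestage" and b: "b \<in> simplex"
    and diff: "\<And>a d s'. belief_update \<pi>A s b a \<in> simplex \<Longrightarrow> \<bar>C1 a d s' - C2 a d s'\<bar> \<le> e"
  shows "\<bar>stage_payoff \<pi>A \<pi>D s b C1 - stage_payoff \<pi>A \<pi>D s b C2\<bar> \<le> \<gamma> * e"
proof -
  have le: "C1 a d s' \<le> C2 a d s' + e" "C2 a d s' \<le> C1 a d s' + e"
    if "belief_update \<pi>A s b a \<in> simplex" for a d s'
    using diff[OF that, of d s'] by (simp_all add: abs_le_iff)
  have "stage_payoff \<pi>A \<pi>D s b C1 \<le> stage_payoff \<pi>A \<pi>D s b C2 + \<gamma> * e"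
    by (rule stage_payoff_le[OF \<pi>A \<pi>D b]) (rule le(1))
  moreover have "stage_payoff \<pi>A \<pi>D s b C2 \<le> stage_payoff \<pi>A \<pi>D s b C1 + \<gamma> * e"
    by (rule stage_payoff_le[OF \<pi>A \<pi>D b]) (rule le(2))
  ultimately show ?thesis
    by (simp add: abs_le_iff)
qed

lemma game_payoff_decompose:
  assumes \<sigma>A: "\<sigma>A \<in> att_strats" and \<sigma>D: "\<sigma>D \<in> def_strats" and b: "b \<in> simplex"
  shows "game_payoff T R \<gamma> \<sigma>A \<sigma>D s b = stage_payoff (\<sigma>A []) (\<sigma>D []) s b (\<lambda>a d s'.
    game_payoff T R \<gamma> (continuation (s, a, d) \<sigma>A) (continuation (s, a, d) \<sigma>D) s'
      (belief_update (\<sigma>A []) s b a))"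
proof -
  define P where
    "P a d s' th = intent_payoff (continuation (s, a, d) \<sigma>A) (continuation (s, a, d) \<sigma>D) s' th"
    for a d s' th
  have "game_payoff T R \<gamma> \<sigma>A \<sigma>D s b = (\<Sum>th\<in>UNIV. \<Sum>a\<in>UNIV. \<Sum>d\<in>UNIV. \<Sum>s'\<in>UNIV.
      b th * \<sigma>A [] s th a * \<sigma>D [] s d * T s a d s' * (R s a d s' th + \<gamma> * P a d s' th))"
    by (simp only: game_payoff_eq_intent_payoff intent_payoff_rec[OF \<sigma>A \<sigma>D] P_def
        sum_distrib_left mult.assoc)
  also have "\<dots> = (\<Sum>a\<in>UNIV. \<Sum>d\<in>UNIV. \<Sum>s'\<in>UNIV. \<Sum>th\<in>UNIV.
      b th * \<sigma>A [] s th a * \<sigma>D [] s d * T s a d s' * (R s a d s' th + \<gamma> * P a d s' th))"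
    by (rule sum_rotate4)
  also have "\<dots> = (\<Sum>a\<in>UNIV. \<Sum>d\<in>UNIV. \<Sum>s'\<in>UNIV. \<Sum>th\<in>UNIV.
      b th * \<sigma>A [] s th a * \<sigma>D [] s d * T s a d s' *
        (R s a d s' th + \<gamma> * (\<Sum>th'\<in>UNIV. belief_update (\<sigma>A []) s b a th' * P a d s' th')))"
    by (rule sum.cong[OF refl], rule sum.cong[OF refl], rule sum.cong[OF refl],
        rule sum_posterior_mean[OF b att_onestage_Nil[OF \<sigma>A]])
  also have "\<dots> = stage_payoff (\<sigma>A []) (\<sigma>D []) s b (\<lambda>a d s'.
      game_payoff T R \<gamma> (continuation (s, a, d) \<sigma>A) (continuation (s, a, d) \<sigma>D) s'
        (belief_update (\<sigma>A []) s b a))"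
    by (simp only: stage_payoff_def game_payoff_eq_intent_payoff P_def)
  finally show ?thesis .
qed

lemma game_payoff_glue_attacker:
  assumes \<pi>A: "\<pi>A \<in> att_onestage" and c: "\<And>a d s'. c a d s' \<in> att_strats"
    and \<sigma>D: "\<sigma>D \<in> def_strats" and b: "b \<in> simplex"
  shows "game_payoff T R \<gamma> (glue \<pi>A c) \<sigma>D s b = stage_payoff \<pi>A (\<sigma>D []) s b (\<lambda>a d s'.
    game_payoff T R \<gamma> (c a d s') (continuation (s, a, d) \<sigma>D) s' (belief_update \<pi>A s b a))"
  by (simp add: game_payoff_decompose[OF att_strats_glue[OF \<pi>A c] \<sigma>D b]
      game_payoff_continuation_glue_attacker)

lemma game_payoff_glue_defender:
  assumes \<sigma>A: "\<sigma>A \<in> att_strats" and \<pi>D: "\<pi>D \<in> def_onestage"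
    and c: "\<And>a d s'. c a d s' \<in> def_strats" and b: "b \<in> simplex"
  shows "game_payoff T R \<gamma> \<sigma>A (glue \<pi>D c) s b = stage_payoff (\<sigma>A []) \<pi>D s b (\<lambda>a d s'.
    game_payoff T R \<gamma> (continuation (s, a, d) \<sigma>A) (c a d s') s' (belief_update (\<sigma>A []) s b a))"
  by (simp add: game_payoff_decompose[OF \<sigma>A def_strats_glue[OF \<pi>D c] b]
      game_payoff_continuation_glue_defender)

subsection \<open>The Bellman equation\<close>

abbreviation V where
  "V \<equiv> ncirl_value T R \<gamma>"

definition security_level where
  "security_level \<sigma>A s b = (INF \<sigma>D\<in>def_strats. game_payoff T R \<gamma> \<sigma>A \<sigma>D s b)"

lemma ncirl_value_eq_SUP_security_level: "V s b = (SUP \<sigma>A\<in>att_strats. security_level \<sigma>A s b)"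
  by (simp add: ncirl_value_def security_level_def)

lemma abs_game_payoff_le:
  assumes "\<sigma>A \<in> att_strats" and "\<sigma>D \<in> def_strats" and "b \<in> simplex"
  shows "\<bar>game_payoff T R \<gamma> \<sigma>A \<sigma>D s b\<bar> \<le> value_bound"
  unfolding game_payoff_eq_intent_payoff
  using assms by (intro simplex_abs_expectation_le abs_intent_payoff_le)

lemma abs_security_level_le:
  assumes "\<sigma>A \<in> att_strats" and "b \<in> simplex"
  shows "\<bar>security_level \<sigma>A s b\<bar> \<le> value_bound"
  unfolding security_level_def
  using assms by (intro abs_INF_le def_strats_nonempty abs_game_payoff_le)

lemma abs_ncirl_value_le: "b \<in> simplex \<Longrightarrow> \<bar>V s b\<bar> \<le> value_bound"
  unfolding ncirl_value_eq_SUP_security_level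
  by (intro abs_SUP_le att_strats_nonempty abs_security_level_le)

lemma bounded_ncirl_value: "bounded_vf V"
  unfolding bounded_vf_def using abs_ncirl_value_le by blast

lemma security_level_le_game_payoff:
  assumes "\<sigma>A \<in> att_strats" and "\<sigma>D \<in> def_strats" and "b \<in> simplex"
  shows "security_level \<sigma>A s b \<le> game_payoff T R \<gamma> \<sigma>A \<sigma>D s b"
  unfolding security_level_def
  by (rule cINF_lower[OF bdd_below_if_abs_le assms(2)]) (use assms abs_game_payoff_le in blast)

lemma security_level_le_ncirl_value:
  assumes "\<sigma>A \<in> att_strats" and "b \<in> simplex"
  shows "security_level \<sigma>A s b \<le> V s b"
  unfolding ncirl_value_eq_SUP_security_level
  by (rule cSUP_upper[OF assms(1) bdd_above_if_abs_le])
    (use assms(2) abs_security_level_le in blast)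

lemma exists_near_best_response:
  assumes "\<sigma>A \<in> att_strats" and "b \<in> simplex" and "0 < e"
  shows "\<exists>\<sigma>D\<in>def_strats. game_payoff T R \<gamma> \<sigma>A \<sigma>D s b < security_level \<sigma>A s b + e"
proof -
  have "bdd_below ((\<lambda>\<sigma>D. game_payoff T R \<gamma> \<sigma>A \<sigma>D s b) ` def_strats)"
    using assms abs_game_payoff_le by (intro bdd_below_if_abs_le) blast
  then have "security_level \<sigma>A s b < security_level \<sigma>A s b + e \<longleftrightarrow>
      (\<exists>\<sigma>D\<in>def_strats. game_payoff T R \<gamma> \<sigma>A \<sigma>D s b < security_level \<sigma>A s b + e)"
    unfolding security_level_def by (rule cINF_less_iff[OF def_strats_nonempty])
  then show ?thesis
    using assms(3) by simp
qed

lemma exists_near_optimal_strategy: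
  assumes "b \<in> simplex" and "0 < e"
  shows "\<exists>\<sigma>A\<in>att_strats. V s b < security_level \<sigma>A s b + e"
proof -
  have "bdd_above ((\<lambda>\<sigma>A. security_level \<sigma>A s b) ` att_strats)"
    using assms abs_security_level_le by (intro bdd_above_if_abs_le) blast
  then have "V s b - e < (SUP \<sigma>A\<in>att_strats. security_level \<sigma>A s b) \<longleftrightarrow>
      (\<exists>\<sigma>A\<in>att_strats. V s b - e < security_level \<sigma>A s b)"
    by (rule less_cSUP_iff[OF att_strats_nonempty])
  then show ?thesis
    using assms(2) by (simp add: ncirl_value_eq_SUP_security_level algebra_simps)
qed

lemma abs_stage_value_le:
  assumes "\<pi>A \<in> att_onestage" and "\<pi>D \<in> def_onestage" and "b \<in> simplex"
  shows "\<bar>stage_value \<pi>A \<pi>D s b V\<bar> \<le> value_bound"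
  using abs_stage_payoff_le[OF assms abs_ncirl_value_le] by (simp add: reward_bound_add_value_bound)

lemma abs_INF_stage_value_le:
  assumes "\<pi>A \<in> att_onestage" and "b \<in> simplex"
  shows "\<bar>INF \<pi>D\<in>def_onestage. stage_value \<pi>A \<pi>D s b V\<bar> \<le> value_bound"
  using assms by (intro abs_INF_le def_onestage_nonempty abs_stage_value_le)

lemma security_level_le_stage_value:
  assumes \<sigma>A: "\<sigma>A \<in> att_strats" and \<pi>D: "\<pi>D \<in> def_onestage" and b: "b \<in> simplex"
  shows "security_level \<sigma>A s b \<le> stage_value (\<sigma>A []) \<pi>D s b V"
proof (rule field_le_epsilon)
  fix e :: real assume e: "0 < e"
  let ?\<tau> = "belief_update (\<sigma>A []) s b"
  have ex: "\<forall>a d s'. ?\<tau> a \<in> simplex \<longrightarrow> (\<exists>\<sigma>D\<in>def_strats.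
      game_payoff T R \<gamma> (continuation (s, a, d) \<sigma>A) \<sigma>D s' (?\<tau> a) \<le> V s' (?\<tau> a) + e)"
  proof (intro allI impI)
    fix a d s' assume \<tau>: "?\<tau> a \<in> simplex"
    have \<sigma>A': "continuation (s, a, d) \<sigma>A \<in> att_strats"
      by (rule att_strats_continuation[OF \<sigma>A])
    obtain \<sigma>D where "\<sigma>D \<in> def_strats"
      and "game_payoff T R \<gamma> (continuation (s, a, d) \<sigma>A) \<sigma>D s' (?\<tau> a)
        < security_level (continuation (s, a, d) \<sigma>A) s' (?\<tau> a) + e"
      using exists_near_best_response[OF \<sigma>A' \<tau> e] by blast
    with security_level_le_ncirl_value[OF \<sigma>A' \<tau>, where s=s']
    show "\<exists>\<sigma>D\<in>def_strats.
        game_payoff T R \<gamma> (continuation (s, a, d) \<sigma>A) \<sigma>D s' (?\<tau> a) \<le> V s' (?\<tau> a) + e"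
      by force
  qed
  obtain c where c: "\<And>a d s'. c a d s' \<in> def_strats"
    and c_near: "\<And>a d s'. ?\<tau> a \<in> simplex \<Longrightarrow>
      game_payoff T R \<gamma> (continuation (s, a, d) \<sigma>A) (c a d s') s' (?\<tau> a) \<le> V s' (?\<tau> a) + e"
    using guarded_choice[OF def_strats_nonempty ex] by blast
  have "security_level \<sigma>A s b \<le> game_payoff T R \<gamma> \<sigma>A (glue \<pi>D c) s b"
    by (rule security_level_le_game_payoff[OF \<sigma>A def_strats_glue[OF \<pi>D c] b])
  also have "\<dots> \<le> stage_value (\<sigma>A []) \<pi>D s b V + \<gamma> * e"
    unfolding game_payoff_glue_defender[OF \<sigma>A \<pi>D c b]
    by (rule stage_payoff_le[OF att_onestage_Nil[OF \<sigma>A] \<pi>D b]) (rule c_near)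
  also have "\<dots> \<le> stage_value (\<sigma>A []) \<pi>D s b V + e"
    using gamma_mult_le[OF less_imp_le[OF e]] by simp
  finally show "security_level \<sigma>A s b \<le> stage_value (\<sigma>A []) \<pi>D s b V + e" .
qed

lemma ncirl_value_le_backup:
  assumes b: "b \<in> simplex"
  shows "V s b \<le> backup T R \<gamma> V s b"
proof -
  have "security_level \<sigma>A s b \<le> backup T R \<gamma> V s b" if \<sigma>A: "\<sigma>A \<in> att_strats" for \<sigma>A
  proof -
    have "security_level \<sigma>A s b \<le> (INF \<pi>D\<in>def_onestage. stage_value (\<sigma>A []) \<pi>D s b V)"
      by (rule cINF_greatest[OF def_onestage_nonempty security_level_le_stage_value[OF \<sigma>A _ b]])
    also have "\<dots> \<le> backup T R \<gamma> V s b"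
      unfolding backup_eq_SUP_INF_stage_value
      by (rule cSUP_upper[OF att_onestage_Nil[OF \<sigma>A]
          bdd_above_if_abs_le[OF abs_INF_stage_value_le[OF _ b]]])
    finally show ?thesis .
  qed
  then have "(SUP \<sigma>A\<in>att_strats. security_level \<sigma>A s b) \<le> backup T R \<gamma> V s b"
    by (rule cSUP_least[OF att_strats_nonempty])
  then show ?thesis
    by (simp only: ncirl_value_eq_SUP_security_level)
qed

lemma INF_stage_value_le_game_payoff_glue:
  assumes \<pi>A: "\<pi>A \<in> att_onestage" and b: "b \<in> simplex" and \<sigma>D: "\<sigma>D \<in> def_strats"
    and c: "\<And>a d s'. c a d s' \<in> att_strats"
    and c_near: "\<And>a d s'. belief_update \<pi>A s b a \<in> simplex \<Longrightarrow>
      V s' (belief_update \<pi>A s b a) \<le> security_level (c a d s') s' (belief_update \<pi>A s b a) + e"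
  shows "(INF \<pi>D\<in>def_onestage. stage_value \<pi>A \<pi>D s b V)
    \<le> game_payoff T R \<gamma> (glue \<pi>A c) \<sigma>D s b + \<gamma> * e"
proof -
  let ?\<tau> = "belief_update \<pi>A s b"
  have "(INF \<pi>D\<in>def_onestage. stage_value \<pi>A \<pi>D s b V) \<le> stage_value \<pi>A (\<sigma>D []) s b V"
    by (rule cINF_lower[OF bdd_below_if_abs_le def_onestage_Nil[OF \<sigma>D]])
      (rule abs_stage_value_le[OF \<pi>A _ b])
  also have "\<dots> \<le> game_payoff T R \<gamma> (glue \<pi>A c) \<sigma>D s b + \<gamma> * e"
    unfolding game_payoff_glue_attacker[OF \<pi>A c \<sigma>D b]
  proof (rule stage_payoff_le[OF \<pi>A def_onestage_Nil[OF \<sigma>D] b])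
    fix a d s' assume \<tau>: "?\<tau> a \<in> simplex"
    show "V s' (?\<tau> a) \<le> game_payoff T R \<gamma> (c a d s') (continuation (s, a, d) \<sigma>D) s' (?\<tau> a) + e"
      using c_near[where d=d and s'=s', OF \<tau>]
        security_level_le_game_payoff[OF c[of a d s']
          def_strats_continuation[OF \<sigma>D, of "(s, a, d)"] \<tau>, where s=s']
      by linarith
  qed
  finally show ?thesis .
qed

lemma INF_stage_value_le_ncirl_value:
  assumes \<pi>A: "\<pi>A \<in> att_onestage" and b: "b \<in> simplex"
  shows "(INF \<pi>D\<in>def_onestage. stage_value \<pi>A \<pi>D s b V) \<le> V s b"
proof (rule field_le_epsilon)
  fix e :: real assume e: "0 < e"
  let ?\<tau> = "belief_update \<pi>A s b"
  let ?I = "INF \<pi>D\<in>def_onestage. stage_value \<pi>A \<pi>D s b V"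
  have ex: "\<forall>a (d::'d) s'. ?\<tau> a \<in> simplex \<longrightarrow>
      (\<exists>\<sigma>A\<in>att_strats. V s' (?\<tau> a) \<le> security_level \<sigma>A s' (?\<tau> a) + e)"
  proof (intro allI impI)
    fix a and d :: 'd and s' assume \<tau>: "?\<tau> a \<in> simplex"
    show "\<exists>\<sigma>A\<in>att_strats. V s' (?\<tau> a) \<le> security_level \<sigma>A s' (?\<tau> a) + e"
      using exists_near_optimal_strategy[OF \<tau> e, where s=s'] by (blast intro: less_imp_le)
  qed
  obtain c where c: "\<And>a d s'. c a d s' \<in> att_strats"
    and c_near: "\<And>a (d::'d) s'. ?\<tau> a \<in> simplex \<Longrightarrow>
      V s' (?\<tau> a) \<le> security_level (c a d s') s' (?\<tau> a) + e"
    using guarded_choice[OF att_strats_nonempty ex] by blast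
  have glued: "glue \<pi>A c \<in> att_strats"
    by (rule att_strats_glue[OF \<pi>A c])
  have "?I - \<gamma> * e \<le> security_level (glue \<pi>A c) s b"
    unfolding security_level_def
    using INF_stage_value_le_game_payoff_glue[OF \<pi>A b _ c c_near]
    by (intro cINF_greatest[OF def_strats_nonempty]) (simp add: diff_le_eq)
  also have "\<dots> \<le> V s b"
    by (rule security_level_le_ncirl_value[OF glued b])
  finally show "?I \<le> V s b + e"
    using gamma_mult_le[OF less_imp_le[OF e]] by linarith
qed

lemma backup_le_ncirl_value: "b \<in> simplex \<Longrightarrow> backup T R \<gamma> V s b \<le> V s b"
  unfolding backup_eq_SUP_INF_stage_value
  by (rule cSUP_least[OF att_onestage_nonempty INF_stage_value_le_ncirl_value])

lemma backup_ncirl_value: "b \<in> simplex \<Longrightarrow> backup T R \<gamma> V s b = V s b"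
  by (intro antisym backup_le_ncirl_value ncirl_value_le_backup)

subsection \<open>Contraction\<close>

lemma bounded_backup:
  assumes "bounded_vf v"
  shows "bounded_vf (backup T R \<gamma> v)"
proof -
  obtain B where B: "\<And>s b. b \<in> simplex \<Longrightarrow> \<bar>v s b\<bar> \<le> B"
    using bounded_vfE[OF assms] by blast
  have "\<bar>backup T R \<gamma> v s b\<bar> \<le> reward_bound + \<gamma> * B" if "b \<in> simplex" for s b
    unfolding backup_eq_SUP_INF_stage_value
    by (intro abs_SUP_le abs_INF_le att_onestage_nonempty def_onestage_nonempty
        abs_stage_payoff_le that B)
  then show ?thesis
    unfolding bounded_vf_def by blast
qed

lemma sup_dist_backup_le:
  assumes v: "bounded_vf v" and w: "bounded_vf w"
  shows "sup_dist (backup T R \<gamma> v) (backup T R \<gamma> w) \<le> \<gamma> * sup_dist v w"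
proof (rule sup_dist_least)
  fix s and b :: "'t \<Rightarrow> real"
  assume b: "b \<in> simplex"
  obtain B where B: "\<And>s b. b \<in> simplex \<Longrightarrow> \<bar>v s b\<bar> \<le> B"
    using bounded_vfE[OF v] by blast
  show "\<bar>backup T R \<gamma> v s b - backup T R \<gamma> w s b\<bar> \<le> \<gamma> * sup_dist v w"
    unfolding backup_eq_SUP_INF_stage_value
  proof (rule abs_SUP_INF_diff_le[OF att_onestage_nonempty def_onestage_nonempty])
    fix \<pi>A :: "'s \<Rightarrow> 't \<Rightarrow> 'a \<Rightarrow> real" and \<pi>D :: "'s \<Rightarrow> 'd \<Rightarrow> real"
    assume \<pi>A: "\<pi>A \<in> att_onestage" and \<pi>D: "\<pi>D \<in> def_onestage"
    show "\<bar>stage_value \<pi>A \<pi>D s b v\<bar> \<le> reward_bound + \<gamma> * B"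
      by (rule abs_stage_payoff_le[OF \<pi>A \<pi>D b]) (rule B)
    show "\<bar>stage_value \<pi>A \<pi>D s b v - stage_value \<pi>A \<pi>D s b w\<bar> \<le> \<gamma> * sup_dist v w"
      by (rule abs_stage_payoff_diff_le[OF \<pi>A \<pi>D b]) (rule sup_dist_upper[OF v w])
  qed
qed

end

theorem lemma2:
  fixes T :: "'s::finite \<Rightarrow> 'a::finite \<Rightarrow> 'd::finite \<Rightarrow> 's \<Rightarrow> real"
    and R :: "'s \<Rightarrow> 'a \<Rightarrow> 'd \<Rightarrow> 's \<Rightarrow> 't::finite \<Rightarrow> real"
    and \<gamma> :: real
  assumes T_dist: "\<forall>s a d. T s a d \<in> simplex"
    and \<gamma>_nonneg: "0 \<le> \<gamma>" and \<gamma>_lt1: "\<gamma> < 1"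
  shows "(\<exists>L. 0 \<le> L \<and> L < 1 \<and>
            (\<forall>v w. bounded_vf v \<longrightarrow> bounded_vf w \<longrightarrow>
               bounded_vf (backup T R \<gamma> v) \<and>
               sup_dist (backup T R \<gamma> v) (backup T R \<gamma> w) \<le> L * sup_dist v w))
       \<and> bounded_vf (ncirl_value T R \<gamma>)
       \<and> (\<forall>s. \<forall>b\<in>simplex. ncirl_value T R \<gamma> s b = backup T R \<gamma> (ncirl_value T R \<gamma>) s b)
       \<and> (\<forall>v0. bounded_vf v0 \<longrightarrow>
            (\<lambda>n. sup_dist ((backup T R \<gamma> ^^ n) v0) (ncirl_value T R \<gamma>)) \<longlonglongrightarrow> 0)"
proof -
  interpret ncirl_game T R \<gamma>
    using T_dist \<gamma>_nonneg \<gamma>_lt1 by unfold_locales auto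
  have contraction: "bounded_vf (backup T R \<gamma> v) \<and>
      sup_dist (backup T R \<gamma> v) (backup T R \<gamma> w) \<le> \<gamma> * sup_dist v w"
    if "bounded_vf v" and "bounded_vf w" for v w
    using bounded_backup[OF that(1)] sup_dist_backup_le[OF that] by blast
  show ?thesis
  proof (intro conjI)
    show "\<exists>L. 0 \<le> L \<and> L < 1 \<and> (\<forall>v w. bounded_vf v \<longrightarrow> bounded_vf w \<longrightarrow>
        bounded_vf (backup T R \<gamma> v) \<and>
        sup_dist (backup T R \<gamma> v) (backup T R \<gamma> w) \<le> L * sup_dist v w)"
      using contraction \<gamma>_nonneg \<gamma>_lt1 by blast
    show "bounded_vf (ncirl_value T R \<gamma>)"
      by (rule bounded_ncirl_value)
    show "\<forall>s. \<forall>b\<in>simplex. ncirl_value T R \<gamma> s b = backup T R \<gamma> (ncirl_value T R \<gamma>) s b"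
      by (simp add: backup_ncirl_value)
    show "\<forall>v0. bounded_vf v0 \<longrightarrow>
        (\<lambda>n. sup_dist ((backup T R \<gamma> ^^ n) v0) (ncirl_value T R \<gamma>)) \<longlonglongrightarrow> 0"
      using contraction_iterates_tendsto[OF \<gamma>_nonneg \<gamma>_lt1 contraction
          bounded_ncirl_value backup_ncirl_value]
      by blast
  qed
qed

end
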